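(* Let $n\geq 2$ and let $m\geq 2$ be an integer. Let $f\in L^{m/(m-1)}(\mathbb{R}^n)$ be a continuous nonnegative function with $f = f^{*_{\mathbf{e}}}$ for some $\mathbf{e}\in\mathbb{S}^{n-1}$, and assume that $$f(x) = h(x)\,(f*\cdots*f)(x)\quad\text{for all } x\in\mathbb{R}^n,$$ where the convolution product has $m$ factors and $h:\mathbb{R}^n\to(0,+\infty)$ is a continuous positive function. Then the set $\{x\in\mathbb{R}^n : f(x)>0\}$ is connected.
   Context: Symmetric-decreasing rearrangement: for a finite-measure set $A\subset\mathbb{R}^k$, $A^*$ is the centered open ball with the same measure; for measurable $u$ vanishing at infinity, $u^*(x)=\int_0^\infty\chi_{\{|u|>t\}^*}(x)\,dt$. Steiner symmetrization: with $x=(x_1,x')\in\mathbb{R}\times\mathbb{R}^{n-1}$, $u^{*_1}(x_1,x') := (u(x_1,\cdot))^*(x')$ (rearrangement in $\mathbb{R}^{n-1}$ for fixed $x_1$); for $\mathbf{e}\in\mathbb{S}^{n-1}$ pick $\mathsf{R}\in\mathrm{O}(n)$ with $\mathsf{R}\mathbf{e}=(1,0,\dots,0)$, $(\mathsf{R}u)(x)=u(\mathsf{R}^{-1}x)$, $u^{*_{\mathbf{e}}}:=\mathsf{R}^{-1}((\mathsf{R}u)^{*_1})$. *)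

theory Defs
  imports "HOL-Analysis.Analysis"
begin

text \<open>We model \<open>\<real>\<^sup>n\<close> as the product type \<open>real \<times> 'b\<close>, where \<open>'b\<close> is a Euclidean space
  playing the role of \<open>\<real>\<^sup>n\<^sup>-\<^sup>1\<close>; thus \<open>n = 1 + DIM('b) \<ge> 2\<close> automatically.\<close>

definition sym_ball :: "'b::euclidean_space set \<Rightarrow> 'b set" where
  "sym_ball A =
     (if emeasure lebesgue A = \<infinity> then UNIV
      else ball 0 (SOME r. 0 \<le> r \<and> emeasure lebesgue (ball (0::'b) r) = emeasure lebesgue A))"

text \<open>Symmetric-decreasing rearrangement (layer-cake), valued in \<open>[0,\<infinity>]\<close>.\<close>
definition sym_rearr :: "('b::euclidean_space \<Rightarrow> real) \<Rightarrow> 'b \<Rightarrow> ennreal" where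
  "sym_rearr u x =
     (\<integral>\<^sup>+ t\<in>{0<..}. indicator (sym_ball {y. \<bar>u y\<bar> > t}) x \<partial>lborel)"

definition steiner1 :: "(real \<times> 'b::euclidean_space \<Rightarrow> real) \<Rightarrow> real \<times> 'b \<Rightarrow> ennreal" where
  "steiner1 u x = sym_rearr (\<lambda>y. u (fst x, y)) (snd x)"

definition steiner_dir ::
  "real \<times> 'b::euclidean_space \<Rightarrow> (real \<times> 'b \<Rightarrow> real) \<Rightarrow> real \<times> 'b \<Rightarrow> ennreal" where
  "steiner_dir e u x =
     (let R = (SOME R :: real \<times> 'b \<Rightarrow> real \<times> 'b. orthogonal_transformation R \<and> R e = (1, 0))
      in steiner1 (u \<circ> inv R) (R x))"

definition conv :: "('a::euclidean_space \<Rightarrow> ennreal) \<Rightarrow> ('a \<Rightarrow> ennreal) \<Rightarrow> 'a \<Rightarrow> ennreal" where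
  "conv f g x = (\<integral>\<^sup>+ y. f y * g (x - y) \<partial>lborel)"

text \<open>\<open>conv_pow k f\<close> is the convolution product \<open>f * \<dots> * f\<close> with \<open>k\<close> factors (\<open>k \<ge> 1\<close>).\<close>
fun conv_pow :: "nat \<Rightarrow> ('a::euclidean_space \<Rightarrow> ennreal) \<Rightarrow> 'a \<Rightarrow> ennreal" where
  "conv_pow 0 f = f"
| "conv_pow (Suc 0) f = f"
| "conv_pow (Suc (Suc k)) f = conv f (conv_pow (Suc k) f)"

definition in_Lp :: "real \<Rightarrow> ('a::euclidean_space \<Rightarrow> real) \<Rightarrow> bool" where
  "in_Lp p f \<longleftrightarrow> f \<in> borel_measurable lebesgue \<and>
     (\<integral>\<^sup>+ x. ennreal (\<bar>f x\<bar> powr p) \<partial>lebesgue) < \<infinity>"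

end

theory Submission
  imports Defs
begin

text \<open>Rotate \<open>e\<close> to the first coordinate axis. Then \<open>f\<close> is radially decreasing around the axis
  on every hyperplane \<open>{x\<^sub>1 = s}\<close>, so its positivity set \<open>P\<close> is the union of segments joining
  its points to the axis, and \<open>P\<close> is connected as soon as its trace \<open>T\<close> on the axis is.
  Since \<open>f = h (f * \<dots> * f)\<close> with \<open>h > 0\<close> and \<open>f\<close> continuous, \<open>P\<close> equals its own \<open>m\<close>-fold
  sumset: the convolution is bounded below near any sum of \<open>m\<close> points of \<open>P\<close>, and a nonzero
  convolution value at \<open>x\<close> writes \<open>x\<close> as such a sum. Projecting, the open set \<open>T \<subseteq> \<real>\<close> equals
  its \<open>m\<close>-fold sumset, which forces it to be an interval: if it meets both half-lines, the
  combinations \<open>x + (m - 1) y\<close> exhaust \<open>\<real>\<close>; if it lies in \<open>(0, \<infinity>)\<close>, it contains arbitrarily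
  small elements (every \<open>t \<in> T\<close> dominates \<open>m s\<close> for some \<open>s \<in> T\<close>), and adding multiples of
  these to a neighbourhood of \<open>t \<in> T\<close> fills \<open>[t, \<infinity>)\<close>.\<close>

definition sumset :: "nat \<Rightarrow> 'a::comm_monoid_add set \<Rightarrow> 'a set" where
  "sumset m S = {\<Sum>i<m. a i | a. \<forall>i<m. a i \<in> S}"

lemma sumset_0 [simp]: "sumset 0 S = {0}"
  by (auto simp: sumset_def)

lemma sumset_Suc: "sumset (Suc m) S = {p + q | p q. p \<in> S \<and> q \<in> sumset m S}"
proof safe
  fix x assume "x \<in> sumset (Suc m) S"
  then obtain a where a: "\<forall>i<Suc m. a i \<in> S" "x = (\<Sum>i<Suc m. a i)"
    by (auto simp: sumset_def)
  then have "x = a 0 + (\<Sum>i<m. a (Suc i))"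
    by (simp only: sum.lessThan_Suc_shift)
  moreover have "(\<Sum>i<m. a (Suc i)) \<in> sumset m S"
    using a(1) by (auto simp: sumset_def)
  ultimately show "\<exists>p q. x = p + q \<and> p \<in> S \<and> q \<in> sumset m S"
    using a(1) by blast
next
  fix p q assume "p \<in> S" "q \<in> sumset m S"
  then obtain b where b: "\<forall>i<m. b i \<in> S" "q = (\<Sum>i<m. b i)"
    by (auto simp: sumset_def)
  have "p + q = (\<Sum>i<Suc m. case_nat p b i)"
    using b(2) by (simp only: sum.lessThan_Suc_shift nat.case)
  moreover have "\<forall>i<Suc m. case_nat p b i \<in> S"
    using \<open>p \<in> S\<close> b(1) by (auto split: nat.split)
  ultimately show "p + q \<in> sumset (Suc m) S"
    unfolding sumset_def by blast
qed

lemma sumset_1 [simp]: "sumset (Suc 0) S = S"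
  by (simp add: sumset_Suc)

lemma sumset_linear_image:
  assumes "linear L"
  shows "sumset m (L ` S) = L ` sumset m S"
proof safe
  fix x assume "x \<in> sumset m (L ` S)"
  then obtain a where "\<forall>i<m. a i \<in> L ` S" "x = (\<Sum>i<m. a i)"
    by (auto simp: sumset_def)
  moreover from this(1) have "\<forall>i. \<exists>b. i < m \<longrightarrow> b \<in> S \<and> a i = L b"
    by blast
  then obtain b where "\<forall>i<m. b i \<in> S \<and> a i = L (b i)"
    by (metis choice)
  ultimately have "x = L (\<Sum>i<m. b i)" "\<forall>i<m. b i \<in> S"
    by (simp_all add: linear_sum[OF assms])
  then show "x \<in> L ` sumset m S"
    by (auto simp: sumset_def)
next
  fix y assume "y \<in> sumset m S"
  then obtain b where "\<forall>i<m. b i \<in> S" "y = (\<Sum>i<m. b i)"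
    by (auto simp: sumset_def)
  then show "L y \<in> sumset m (L ` S)"
    by (auto simp: sumset_def linear_sum[OF assms])
qed

lemma sumset_fixed_add_scaled:
  fixes T :: "'a::comm_semiring_1 set"
  assumes "sumset m T = T" "m > 0" "x \<in> T" "y \<in> T"
  shows "x + of_nat (m - 1) * y \<in> T"
proof -
  obtain k where m: "m = Suc k"
    using \<open>m > 0\<close> gr0_implies_Suc by blast
  have "of_nat k * y \<in> sumset k T"
    unfolding sumset_def using \<open>y \<in> T\<close> by (intro CollectI exI[of _ "\<lambda>_. y"]) simp
  then have "x + of_nat k * y \<in> sumset m T"
    using \<open>x \<in> T\<close> by (auto simp: m sumset_Suc)
  then show ?thesis
    using assms(1) by (simp add: m)
qed

lemma sumset_fixed_ex_le:
  fixes T :: "'a::linordered_semidom set"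
  assumes "sumset m T = T" "m > 0" "t \<in> T"
  shows "\<exists>s\<in>T. of_nat m * s \<le> t"
proof -
  obtain a where a: "\<forall>i<m. a i \<in> T" "t = (\<Sum>i<m. a i)"
    using assms by (auto simp: sumset_def)
  have "Min (a ` {..<m}) \<in> a ` {..<m}"
    using \<open>m > 0\<close> by (intro Min_in) auto
  then obtain j where j: "j < m" "a j = Min (a ` {..<m})"
    by auto
  have "of_nat m * a j \<le> t"
    using sum_bounded_below[of "{..<m}" "a j" a] j by (simp add: a(2))
  then show ?thesis
    using a(1) j(1) by blast
qed

lemma add_scaled_closed_iterate:
  fixes T :: "real set"
  assumes closed: "\<And>x y. x \<in> T \<Longrightarrow> y \<in> T \<Longrightarrow> x + d * y \<in> T"
    and "x \<in> T" "y \<in> T"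
  shows "x + real j * (d * y) \<in> T"
  using \<open>x \<in> T\<close>
proof (induction j arbitrary: x)
  case (Suc j)
  from Suc.IH[OF closed[OF Suc.prems \<open>y \<in> T\<close>]] show ?case
    by (simp add: algebra_simps)
qed simp

lemma exists_nat_combination_near:
  fixes t1 t2 w \<epsilon> :: real
  assumes "t1 < 0" "t2 > 0" "\<epsilon> > 0"
  obtains n k :: nat and u where "dist u t2 < \<epsilon>" "real n * u + real k * t1 = w"
proof -
  obtain n :: nat where "real n > max (- t1 / \<epsilon>) (\<bar>w\<bar> / t2)"
    using reals_Archimedean2 by blast
  then have n: "- t1 < real n * \<epsilon>" "w \<le> real n * t2"
    using assms by (auto simp: field_simps split: abs_split)
  have "real n > 0"
    using n(1) \<open>t1 < 0\<close> by (cases "n = 0") auto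
  define a where "a = (real n * t2 - w) / (- t1)"
  have "a \<ge> 0"
    unfolding a_def using n(2) \<open>t1 < 0\<close> by (intro divide_nonneg_pos) auto
  define k where "k = nat \<lfloor>a\<rfloor>"
  have k: "real k \<le> a" "a < real k + 1"
    using \<open>a \<ge> 0\<close> unfolding k_def by linarith+
  define u where "u = t2 - (- t1) * (a - real k) / real n"
  have "(- t1) * (a - real k) < (- t1) * 1"
    using k \<open>t1 < 0\<close> by (intro mult_strict_left_mono) auto
  then have "(- t1) * (a - real k) < real n * \<epsilon>"
    using n(1) by linarith
  then have "dist u t2 < \<epsilon>"
    unfolding u_def dist_real_def using k \<open>t1 < 0\<close> \<open>real n > 0\<close> by (simp add: field_simps)
  moreover have "real n * u + real k * t1 = w"
    unfolding u_def a_def using \<open>t1 < 0\<close> \<open>real n > 0\<close> by (simp add: field_simps)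
  ultimately show thesis
    using that by blast
qed

lemma add_scaled_closed_mixed_signs_eq_UNIV:
  fixes T :: "real set"
  assumes "open T" "d > 0"
    and closed: "\<And>x y. x \<in> T \<Longrightarrow> y \<in> T \<Longrightarrow> x + d * y \<in> T"
    and "t1 \<in> T" "t1 < 0" "t2 \<in> T" "t2 > 0"
  shows "T = UNIV"
proof -
  obtain \<epsilon> where "\<epsilon> > 0" "ball t2 \<epsilon> \<subseteq> T"
    using \<open>open T\<close> \<open>t2 \<in> T\<close> open_contains_ball by blast
  have "z \<in> T" for z
  proof -
    obtain n k :: nat and u where u: "dist u t2 < \<epsilon>" "real n * u + real k * t1 = (z - t2) / d"
      using exists_nat_combination_near[OF \<open>t1 < 0\<close> \<open>t2 > 0\<close> \<open>\<epsilon> > 0\<close>] by metis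
    have "u \<in> T"
      using u(1) \<open>ball t2 \<epsilon> \<subseteq> T\<close> by (auto simp: dist_commute)
    then have "t2 + real n * (d * u) \<in> T"
      using add_scaled_closed_iterate[OF closed \<open>t2 \<in> T\<close>] by blast
    from add_scaled_closed_iterate[OF closed this \<open>t1 \<in> T\<close>, of k]
    have "t2 + d * (real n * u + real k * t1) \<in> T"
      by (simp add: algebra_simps)
    then show "z \<in> T"
      using u(2) \<open>d > 0\<close> by simp
  qed
  then show ?thesis
    by blast
qed

lemma add_scaled_closed_upward:
  fixes T :: "real set"
  assumes "open T" "d > 0"
    and closed: "\<And>x y. x \<in> T \<Longrightarrow> y \<in> T \<Longrightarrow> x + d * y \<in> T"
    and pos: "T \<subseteq> {0<..}" and small: "\<And>\<epsilon>. \<epsilon> > 0 \<Longrightarrow> \<exists>s\<in>T. s < \<epsilon>"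
    and "t \<in> T" "t \<le> z"
  shows "z \<in> T"
proof -
  obtain \<epsilon> where "\<epsilon> > 0" "ball t \<epsilon> \<subseteq> T"
    using \<open>open T\<close> \<open>t \<in> T\<close> open_contains_ball by blast
  then obtain s where "s \<in> T" "s < \<epsilon> / d"
    using small[of "\<epsilon> / d"] \<open>d > 0\<close> by auto
  then have ds: "0 < d * s" "d * s < \<epsilon>"
    using pos \<open>d > 0\<close> by (auto simp: field_simps)
  define j where "j = nat \<lfloor>(z - t) / (d * s)\<rfloor>"
  have "real j \<le> (z - t) / (d * s)" "(z - t) / (d * s) < real j + 1"
    using \<open>t \<le> z\<close> ds unfolding j_def by auto
  then have "real j * (d * s) \<le> z - t" "z - t < real j * (d * s) + d * s"
    using ds by (simp_all add: field_simps)
  then have "z - real j * (d * s) \<in> T"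
    using ds \<open>ball t \<epsilon> \<subseteq> T\<close> by (auto simp: dist_real_def)
  from add_scaled_closed_iterate[OF closed this \<open>s \<in> T\<close>, of j] show ?thesis
    by simp
qed

lemma sumset_fixed_nonneg_is_interval:
  fixes T :: "real set"
  assumes "open T" "m \<ge> 2" and fixed: "sumset m T = T" and nonneg: "T \<subseteq> {0..}"
  shows "is_interval T"
proof (cases "T = {}")
  case False
  have pos: "T \<subseteq> {0<..}"
  proof
    fix t assume "t \<in> T"
    obtain \<epsilon> where "\<epsilon> > 0" "ball t \<epsilon> \<subseteq> T"
      using \<open>open T\<close> \<open>t \<in> T\<close> open_contains_ball by blast
    then have "t - \<epsilon> / 2 \<in> T"
      by (auto simp: dist_real_def)
    then show "t \<in> {0<..}"
      using nonneg \<open>\<epsilon> > 0\<close> by force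
  qed
  have bdd: "bdd_below T"
    using nonneg by (auto intro: bdd_belowI)
  have "Inf T \<le> 0"
  proof (rule ccontr)
    assume "\<not> Inf T \<le> 0"
    then have "Inf T < real m * Inf T"
      using \<open>m \<ge> 2\<close> by (simp add: mult_less_cancel_right1)
    then obtain t where "t \<in> T" "t < real m * Inf T"
      using cInf_less_iff[OF False bdd] by blast
    moreover obtain s where "s \<in> T" "real m * s \<le> t"
      using sumset_fixed_ex_le[OF fixed _ \<open>t \<in> T\<close>] \<open>m \<ge> 2\<close> by auto
    ultimately have "real m * s < real m * Inf T"
      by linarith
    then have "s < Inf T"
      using \<open>m \<ge> 2\<close> by (simp add: mult_less_cancel_left_pos)
    then show False
      using cInf_lower[OF \<open>s \<in> T\<close> bdd] by simp
  qed
  then have small: "\<exists>s\<in>T. s < \<epsilon>" if "\<epsilon> > 0" for \<epsilon>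
    using cInf_less_iff[OF False bdd, of \<epsilon>] that by auto
  have closed: "x + real (m - 1) * y \<in> T" if "x \<in> T" "y \<in> T" for x y
    using sumset_fixed_add_scaled[OF fixed _ that] \<open>m \<ge> 2\<close> by simp
  have "real (m - 1) > 0"
    using \<open>m \<ge> 2\<close> by simp
  note upward = add_scaled_closed_upward[OF \<open>open T\<close> this closed pos small]
  show ?thesis
    unfolding is_interval_1 using upward by blast
qed simp

lemma sumset_fixed_open_connected_1:
  fixes T :: "real set"
  assumes "open T" "m \<ge> 2" and fixed: "sumset m T = T"
  shows "connected T"
proof -
  consider t1 t2 where "t1 \<in> T" "t1 < 0" "t2 \<in> T" "t2 > 0" | "T \<subseteq> {0..}" | "T \<subseteq> {..0}"
    by (metis atLeast_iff atMost_iff linorder_not_le subsetI)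
  then show ?thesis
  proof cases
    case 1
    have "real (m - 1) > 0"
      using \<open>m \<ge> 2\<close> by simp
    moreover have "x + real (m - 1) * y \<in> T" if "x \<in> T" "y \<in> T" for x y
      using sumset_fixed_add_scaled[OF fixed _ that] \<open>m \<ge> 2\<close> by simp
    ultimately have "T = UNIV"
      using add_scaled_closed_mixed_signs_eq_UNIV[OF \<open>open T\<close>] 1 by blast
    then show ?thesis
      by simp
  next
    case 2
    then show ?thesis
      using sumset_fixed_nonneg_is_interval[OF assms] is_interval_connected by blast
  next
    case 3
    have "sumset m (uminus ` T) = uminus ` T"
      by (simp only: sumset_linear_image[OF linear_uminus] fixed)
    moreover have "uminus ` T \<subseteq> {0..}"
      using 3 by auto
    ultimately have "is_interval (uminus ` T)"
      using sumset_fixed_nonneg_is_interval[OF open_negations[OF \<open>open T\<close>] \<open>m \<ge> 2\<close>] by blast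
    then show ?thesis
      by (simp add: is_interval_connected is_interval_uminus)
  qed
qed

lemma conv_pow_nonzero_in_sumset:
  fixes F :: "'a::euclidean_space \<Rightarrow> ennreal"
  assumes "conv_pow (Suc k) F x \<noteq> 0"
  shows "x \<in> sumset (Suc k) {y. F y \<noteq> 0}"
  using assms
proof (induction k arbitrary: x)
  case (Suc k)
  have "(\<integral>\<^sup>+ y. F y * conv_pow (Suc k) F (x - y) \<partial>lborel) \<noteq> 0"
    using Suc.prems by (simp add: conv_def)
  then have "\<exists>y. F y * conv_pow (Suc k) F (x - y) \<noteq> 0"
  proof (rule contrapos_np)
    assume "\<nexists>y. F y * conv_pow (Suc k) F (x - y) \<noteq> 0"
    then have "(\<lambda>y. F y * conv_pow (Suc k) F (x - y)) = (\<lambda>_. 0)"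
      by auto
    then show "(\<integral>\<^sup>+ y. F y * conv_pow (Suc k) F (x - y) \<partial>lborel) = 0"
      by simp
  qed
  then obtain y where "F y * conv_pow (Suc k) F (x - y) \<noteq> 0"
    by blast
  then have "F y \<noteq> 0" "x - y \<in> sumset (Suc k) {y. F y \<noteq> 0}"
    using Suc.IH by auto
  then show ?case
    unfolding sumset_Suc[of "Suc k"] by force
qed simp

lemma continuous_on_ge_half_near:
  fixes f :: "'a::metric_space \<Rightarrow> real"
  assumes "continuous_on UNIV f" "f p > 0"
  obtains r where "r > 0" "\<And>y. dist y p < r \<Longrightarrow> f p / 2 \<le> f y"
proof -
  obtain r where r: "r > 0" "\<And>y. dist y p < r \<Longrightarrow> dist (f y) (f p) < f p / 2"
    using assms unfolding continuous_on_iff by (metis UNIV_I half_gt_zero)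
  have "f p / 2 \<le> f y" if "dist y p < r" for y
    using r(2)[OF that] abs_less_iff[of "f y - f p"] unfolding dist_real_def by linarith
  with r(1) show thesis
    by (rule that)
qed

lemma emeasure_lborel_ball_pos:
  fixes p :: "'a::euclidean_space"
  assumes "r > 0"
  shows "emeasure lborel (ball p r) > 0"
  using assms content_ball_pos[of r p] emeasure_lborel_ball_finite[of p r]
  by (simp add: emeasure_eq_ennreal_measure)

lemma conv_pow_bounded_below_near_sumset:
  fixes f :: "'a::euclidean_space \<Rightarrow> real"
  assumes cont: "continuous_on UNIV f" and "x \<in> sumset (Suc k) {y. f y > 0}"
  shows "\<exists>r>0. \<exists>c>0. \<forall>x'. dist x' x < r \<longrightarrow> c \<le> conv_pow (Suc k) (\<lambda>y. ennreal (f y)) x'"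
  using assms(2)
proof (induction k arbitrary: x)
  case 0
  then have "f x > 0"
    by simp
  then obtain r where "r > 0" "\<And>y. dist y x < r \<Longrightarrow> f x / 2 \<le> f y"
    using continuous_on_ge_half_near[OF cont] by blast
  then have "\<forall>x'. dist x' x < r \<longrightarrow> ennreal (f x / 2) \<le> ennreal (f x')"
    by (auto intro: ennreal_leI)
  moreover have "ennreal (f x / 2) > 0"
    using \<open>f x > 0\<close> by simp
  ultimately show ?case
    using \<open>r > 0\<close> by (simp only: conv_pow.simps) blast
next
  case (Suc k)
  let ?G = "conv_pow (Suc k) (\<lambda>y. ennreal (f y))"
  obtain p q where x: "x = p + q" and "f p > 0" and "q \<in> sumset (Suc k) {y. f y > 0}"
    using Suc.prems unfolding sumset_Suc[of "Suc k"] by blast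
  then obtain r2 c2 where r2: "r2 > 0" "c2 > 0" "\<And>x'. dist x' q < r2 \<Longrightarrow> c2 \<le> ?G x'"
    using Suc.IH by blast
  obtain r1 where r1: "r1 > 0" "\<And>y. dist y p < r1 \<Longrightarrow> f p / 2 \<le> f y"
    using continuous_on_ge_half_near[OF cont \<open>f p > 0\<close>] by blast
  define r where "r = min r1 r2 / 2"
  have r: "r > 0" "r \<le> r1" "2 * r \<le> r2"
    using r1 r2 unfolding r_def by auto
  define c where "c = ennreal (f p / 2) * c2"
  have "c > 0"
    unfolding c_def using \<open>f p > 0\<close> r2 by (simp add: ennreal_zero_less_mult_iff)
  show ?case
  proof (intro exI[of _ r] exI[of _ "c * emeasure lborel (ball p r)"] conjI allI impI)
    show "0 < c * emeasure lborel (ball p r)"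
      using \<open>c > 0\<close> emeasure_lborel_ball_pos[OF \<open>r > 0\<close>] by (simp add: ennreal_zero_less_mult_iff)
    fix x' assume "dist x' x < r"
    have "c * indicator (ball p r) y \<le> ennreal (f y) * ?G (x' - y)" for y
    proof (cases "y \<in> ball p r")
      case True
      then have "f p / 2 \<le> f y"
        using r1 r by (auto simp: dist_commute)
      moreover have "dist (x' - y) q \<le> dist x' x + dist p y"
        using norm_triangle_ineq[of "x' - x" "p - y"] unfolding x by (simp add: dist_norm algebra_simps)
      then have "dist (x' - y) q < r2"
        using True \<open>dist x' x < r\<close> r by simp
      ultimately show ?thesis
        unfolding c_def using True r2(3) by (auto intro!: mult_mono ennreal_leI)
    qed simp
    then have "(\<integral>\<^sup>+ y. c * indicator (ball p r) y \<partial>lborel)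
        \<le> (\<integral>\<^sup>+ y. ennreal (f y) * ?G (x' - y) \<partial>lborel)"
      by (intro nn_integral_mono)
    then show "c * emeasure lborel (ball p r) \<le> conv_pow (Suc (Suc k)) (\<lambda>y. ennreal (f y)) x'"
      by (simp add: conv_def nn_integral_cmult_indicator)
  qed (use \<open>r > 0\<close> in auto)
qed

lemma sumset_pos_set_conv_pow_eq:
  fixes f h :: "'a::euclidean_space \<Rightarrow> real"
  assumes "m > 0" "continuous_on UNIV f" "\<And>x. h x > 0"
    and eq: "\<And>x. ennreal (f x) = ennreal (h x) * conv_pow m (\<lambda>y. ennreal (f y)) x"
  shows "sumset m {x. f x > 0} = {x. f x > 0}"
proof -
  obtain k where m: "m = Suc k"
    using \<open>m > 0\<close> gr0_implies_Suc by blast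
  have pos_iff: "f x > 0 \<longleftrightarrow> conv_pow m (\<lambda>y. ennreal (f y)) x \<noteq> 0" for x
    using eq[of x] \<open>h x > 0\<close> by (metis ennreal_eq_0_iff mult_eq_0_iff not_le)
  show ?thesis
  proof
    show "sumset m {x. f x > 0} \<subseteq> {x. f x > 0}"
    proof
      fix x assume "x \<in> sumset m {x. f x > 0}"
      then obtain r c where "r > 0" "c > 0"
        "\<forall>x'. dist x' x < r \<longrightarrow> c \<le> conv_pow m (\<lambda>y. ennreal (f y)) x'"
        using conv_pow_bounded_below_near_sumset[OF \<open>continuous_on UNIV f\<close>, of x k] unfolding m by blast
      then have "c \<le> conv_pow m (\<lambda>y. ennreal (f y)) x"
        by simp
      then have "conv_pow m (\<lambda>y. ennreal (f y)) x \<noteq> 0"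
        using \<open>c > 0\<close> by auto
      then show "x \<in> {x. f x > 0}"
        using pos_iff by simp
    qed
    show "{x. f x > 0} \<subseteq> sumset m {x. f x > 0}"
      using conv_pow_nonzero_in_sumset pos_iff by (fastforce simp: m ennreal_eq_0_iff not_le)
  qed
qed

lemma sym_rearr_antimono_norm:
  assumes "norm y' \<le> norm y"
  shows "sym_rearr u y \<le> sym_rearr u y'"
  unfolding sym_rearr_def
proof (rule nn_integral_mono)
  fix t
  have "y' \<in> sym_ball A" if "y \<in> sym_ball A" for A
    using that assms unfolding sym_ball_def by (auto split: if_splits)
  then show "indicator (sym_ball {y. t < \<bar>u y\<bar>}) y * indicator {0<..} t
      \<le> (indicator (sym_ball {y. t < \<bar>u y\<bar>}) y' * indicator {0<..} t :: ennreal)"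
    by (auto simp: indicator_def)
qed

lemma orthogonal_transformation_exists_euclidean:
  fixes a b :: "'a::euclidean_space"
  assumes "norm a = norm b"
  shows "\<exists>R. orthogonal_transformation R \<and> R a = b"
proof (cases "a = b")
  case True
  then show ?thesis
    by (intro exI[of _ "\<lambda>x. x"]) simp
next
  case False
  define v where "v = a - b"
  have "v \<bullet> v \<noteq> 0"
    using False unfolding v_def by simp
  \<comment> \<open>the Householder reflection exchanging \<open>a\<close> and \<open>b\<close>\<close>
  define R where "R x = x - (2 * (x \<bullet> v) / (v \<bullet> v)) *\<^sub>R v" for x
  have "linear R"
    unfolding R_def by (intro linearI) (auto simp: inner_add_left algebra_simps add_divide_distrib)
  moreover have "R x \<bullet> R y = x \<bullet> y" for x y
    unfolding R_def using \<open>v \<bullet> v \<noteq> 0\<close>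
    by (simp add: inner_diff_left inner_diff_right inner_commute field_simps power2_eq_square)
  moreover have "a \<bullet> a = b \<bullet> b"
    using assms by (simp add: dot_square_norm)
  then have "v \<bullet> v = 2 * (a \<bullet> v)"
    unfolding v_def by (simp add: inner_diff_left inner_diff_right inner_commute)
  then have "R a = a - v"
    unfolding R_def using \<open>v \<bullet> v \<noteq> 0\<close> by simp
  then have "R a = b"
    unfolding v_def by simp
  ultimately show ?thesis
    unfolding orthogonal_transformation_def by blast
qed

lemma steiner_dir_fixed_radially_decreasing:
  fixes f :: "real \<times> 'b::euclidean_space \<Rightarrow> real"
  assumes "norm e = 1" "\<And>x. f x \<ge> 0" "\<And>x. ennreal (f x) = steiner_dir e f x"
  obtains Q :: "real \<times> 'b \<Rightarrow> real \<times> 'b" where "orthogonal_transformation Q"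
    "\<And>s y y'. norm y' \<le> norm y \<Longrightarrow> f (Q (s, y)) \<le> f (Q (s, y'))"
proof -
  define R where "R = (SOME R :: real \<times> 'b \<Rightarrow> real \<times> 'b. orthogonal_transformation R \<and> R e = (1, 0))"
  have "norm e = norm (1::real, 0::'b)"
    using assms(1) by (simp add: norm_Pair)
  from someI_ex[OF orthogonal_transformation_exists_euclidean[OF this]]
  have "orthogonal_transformation R"
    unfolding R_def by blast
  then have RQ: "R (inv R z) = z" for z
    by (simp add: orthogonal_transformation_surj surj_f_inv_f)
  have sym: "ennreal (f (inv R (s, y))) = sym_rearr (\<lambda>w. f (inv R (s, w))) y" for s y
    using assms(3)[of "inv R (s, y)"] by (simp add: steiner_dir_def steiner1_def R_def[symmetric] RQ)
  show thesis
  proof (rule that[where Q = "inv R"])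
    show "orthogonal_transformation (inv R)"
      using \<open>orthogonal_transformation R\<close> by (rule orthogonal_transformation_inv)
    fix s and y y' :: 'b
    assume "norm y' \<le> norm y"
    then have "ennreal (f (inv R (s, y))) \<le> ennreal (f (inv R (s, y')))"
      unfolding sym by (rule sym_rearr_antimono_norm)
    then show "f (inv R (s, y)) \<le> f (inv R (s, y'))"
      using assms(2) by (simp add: ennreal_le_iff)
  qed
qed

lemma connected_pos_set_radially_decreasing:
  fixes g :: "real \<times> 'b::euclidean_space \<Rightarrow> real"
  assumes radial: "\<And>s y y'. norm y' \<le> norm y \<Longrightarrow> g (s, y) \<le> g (s, y')"
    and axis: "connected {s. g (s, 0) > 0}"
  shows "connected {z. g z > 0}"
proof -
  let ?Q = "{z. g z > 0}"
  define A where "A = (\<lambda>s. (s, 0::'b)) ` {s. g (s, 0) > 0}"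
  have "connected A"
    unfolding A_def using axis by (intro connected_continuous_image) (auto intro: continuous_intros)
  have segment: "closed_segment z (fst z, 0) \<subseteq> ?Q" if "z \<in> ?Q" for z
  proof
    fix w assume "w \<in> closed_segment z (fst z, 0::'b)"
    then obtain u :: real where u: "0 \<le> u" "u \<le> 1" "w = (1 - u) *\<^sub>R z + u *\<^sub>R (fst z, 0)"
      unfolding closed_segment_def by blast
    then have "w = (fst z, (1 - u) *\<^sub>R snd z)"
      by (cases z) (simp add: algebra_simps)
    moreover have "norm ((1 - u) *\<^sub>R snd z) \<le> norm (snd z)"
      using u by (simp add: mult_left_le_one_le)
    ultimately have "g z \<le> g w"
      using radial[of "(1 - u) *\<^sub>R snd z" "snd z" "fst z"] by simp
    then show "w \<in> ?Q"
      using that by simp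
  qed
  have "?Q \<subseteq> A \<union> (\<Union>z\<in>?Q. closed_segment z (fst z, 0))"
    using ends_in_segment(1) by blast
  moreover have "A \<subseteq> ?Q" "(\<Union>z\<in>?Q. closed_segment z (fst z, 0)) \<subseteq> ?Q"
    using segment unfolding A_def by auto
  ultimately have "?Q = A \<union> (\<Union>z\<in>?Q. closed_segment z (fst z, 0))"
    by blast
  also have "connected \<dots>"
  proof (rule connected_Un_UN[OF \<open>connected A\<close>])
    fix X assume "X \<in> (\<lambda>z. closed_segment z (fst z, 0)) ` ?Q"
    then obtain z where z: "z \<in> ?Q" "X = closed_segment z (fst z, 0)"
      by blast
    then show "connected X"
      by simp
    have "(fst z, 0) \<in> ?Q"
      using segment[OF z(1)] by auto
    then show "A \<inter> X \<noteq> {}"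
      unfolding A_def z(2) by auto
  qed
  finally show ?thesis .
qed

lemma connected_pos_set_radially_decreasing_sumset:
  fixes g :: "real \<times> 'b::euclidean_space \<Rightarrow> real"
  assumes "continuous_on UNIV g" "m \<ge> 2"
    and fixed: "sumset m {z. g z > 0} = {z. g z > 0}"
    and radial: "\<And>s y y'. norm y' \<le> norm y \<Longrightarrow> g (s, y) \<le> g (s, y')"
  shows "connected {z. g z > 0}"
proof (rule connected_pos_set_radially_decreasing[where g = g, OF radial])
  have "open {z. g z > 0}"
    using \<open>continuous_on UNIV g\<close> by (intro open_Collect_less) (auto intro: continuous_intros)
  moreover have axis: "{s. g (s, 0) > 0} = fst ` {z. g z > 0}"
  proof
    show "{s. g (s, 0) > 0} \<subseteq> fst ` {z. g z > 0}"
      by (auto intro: image_eqI[where x = "(_, 0)"])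
    have "g z \<le> g (fst z, 0)" for z
      using radial[of 0 "snd z" "fst z"] by simp
    then show "fst ` {z. g z > 0} \<subseteq> {s. g (s, 0) > 0}"
      using order.strict_trans2 by fastforce
  qed
  ultimately have "open {s. g (s, 0) > 0}"
    by (simp add: open_image_fst)
  moreover have "sumset m {s. g (s, 0) > 0} = {s. g (s, 0) > 0}"
    unfolding axis by (simp add: sumset_linear_image[OF linear_fst] fixed)
  ultimately show "connected {s. g (s, 0) > 0}"
    using sumset_fixed_open_connected_1 \<open>m \<ge> 2\<close> by blast
qed

theorem lemma4p2:
  fixes f h :: "real \<times> 'b::euclidean_space \<Rightarrow> real"
    and m :: nat and e :: "real \<times> 'b"
  assumes "m \<ge> 2"
    and "in_Lp (real m / (real m - 1)) f"
    and "continuous_on UNIV f"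
    and "\<And>x. f x \<ge> 0"
    and "norm e = 1"
    and "\<And>x. ennreal (f x) = steiner_dir e f x"
    and "continuous_on UNIV h"
    and "\<And>x. h x > 0"
    and "\<And>x. ennreal (f x) = ennreal (h x) * conv_pow m (\<lambda>y. ennreal (f y)) x"
  shows "connected {x. f x > 0}"
proof -
  obtain Q :: "real \<times> 'b \<Rightarrow> real \<times> 'b" where Q: "orthogonal_transformation Q"
    and radial: "\<And>s y y'. norm y' \<le> norm y \<Longrightarrow> f (Q (s, y)) \<le> f (Q (s, y'))"
    using steiner_dir_fixed_radially_decreasing[OF assms(5,4,6)] by blast
  have "linear Q" "inj Q"
    using Q by (simp_all add: orthogonal_transformation_linear orthogonal_transformation_inj)
  then have "continuous_on UNIV Q"
    by (simp add: linear_continuous_on linear_conv_bounded_linear)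
  have pos_image: "{x. f x > 0} = Q ` {z. f (Q z) > 0}"
    using surj_image_vimage_eq[OF orthogonal_transformation_surj[OF Q], of "{x. f x > 0}"]
    by (simp add: vimage_def)
  have "sumset m {x. f x > 0} = {x. f x > 0}"
    using sumset_pos_set_conv_pow_eq[OF _ assms(3,8,9)] assms(1) by simp
  then have "sumset m {z. f (Q z) > 0} = {z. f (Q z) > 0}"
    unfolding pos_image sumset_linear_image[OF \<open>linear Q\<close>]
    by (simp add: inj_image_eq_iff[OF \<open>inj Q\<close>])
  moreover have "continuous_on UNIV (\<lambda>z. f (Q z))"
    by (rule continuous_on_compose2[OF assms(3) \<open>continuous_on UNIV Q\<close>]) simp
  ultimately have "connected {z. f (Q z) > 0}"
    using connected_pos_set_radially_decreasing_sumset assms(1) radial by blast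
  then show ?thesis
    unfolding pos_image
    by (rule connected_continuous_image[OF continuous_on_subset[OF \<open>continuous_on UNIV Q\<close> subset_UNIV]])
qed

end
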